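(* Let $\mathcal{X}\subset\mathbb{R}^d$ be a compact metric space, $\mathcal{Y}\subset\mathbb{R}$, and let $(X,Y)$ be distributed according to a probability measure $\rho$ on $\mathcal{X}\times\mathcal{Y}$ with marginal $\rho_{\mathcal{X}}$ on $\mathcal{X}$. Let $f^\star(x)=\mathbb{E}(Y\mid X=x)$ be bounded, let $\mathcal{H}\subset C(\mathcal{X})$ be uniformly bounded, and set $M=\max\{\|f^\star\|_\infty,\sup_{f\in\mathcal{H}}\|f\|_\infty\}$. Assume there is $\epsilon>0$ with $\mathbb{E}|Y|^{1+\epsilon}<+\infty$. Let $\sigma>\max\{2M,1\}$. Then there exists a constant $c_\epsilon>0$ independent of $\sigma$ such that for every measurable function $f:\mathcal{X}\to\mathbb{R}$ with $\|f\|_\infty\le M$, \[ \Big|\big[\mathcal{R}^\sigma(f)-\mathcal{R}^\sigma(f^\star)\big]-\|f-f^\star\|_{2,\rho}^2\Big|\le \frac{c_\epsilon}{\sigma^\epsilon}. \]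
   Context: The Huber loss with scale parameter $\sigma>0$ is $\ell_\sigma(t)=t^2$ if $|t|\le\sigma$ and $\ell_\sigma(t)=2\sigma|t|-\sigma^2$ otherwise. The generalization error of a measurable $f:\mathcal{X}\to\mathbb{R}$ is $\mathcal{R}^\sigma(f)=\mathbb{E}\,\ell_\sigma(Y-f(X))$, the expectation taken jointly over $(X,Y)\sim\rho$. $\|g\|_{2,\rho}$ denotes the $L^2(\rho_{\mathcal{X}})$ norm $\big(\int_{\mathcal{X}} g(x)^2\,d\rho_{\mathcal{X}}(x)\big)^{1/2}$. *)

theory Defs
  imports "HOL-Probability.Probability"
begin

definition huber :: "real \<Rightarrow> real \<Rightarrow> real" where
  "huber \<sigma> t = (if \<bar>t\<bar> \<le> \<sigma> then t\<^sup>2 else 2 * \<sigma> * \<bar>t\<bar> - \<sigma>\<^sup>2)"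

definition huber_risk :: "real \<Rightarrow> ('a \<times> real) measure \<Rightarrow> ('a \<Rightarrow> real) \<Rightarrow> real" where
  "huber_risk \<sigma> \<rho> f = (\<integral>z. huber \<sigma> (snd z - f (fst z)) \<partial>\<rho>)"

definition marginal_X :: "('a::topological_space \<times> real) measure \<Rightarrow> 'a measure" where
  "marginal_X \<rho> = distr \<rho> borel fst"

definition L2_norm_rho :: "('a::topological_space \<times> real) measure \<Rightarrow> ('a \<Rightarrow> real) \<Rightarrow> real" where
  "L2_norm_rho \<rho> g = sqrt (\<integral>x. (g x)\<^sup>2 \<partial>(marginal_X \<rho>))"

definition sup_norm_on :: "'a set \<Rightarrow> ('a \<Rightarrow> real) \<Rightarrow> real" where
  "sup_norm_on X f = (SUP x\<in>X. \<bar>f x\<bar>)"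

end

theory Submission
  imports Defs
begin

(* On the event |Y| <= sigma - M both residuals Y - f(X) and Y - fstar(X) lie in the quadratic
   zone of the Huber loss, so the difference of the losses is exactly
   (f - fstar)^2 - 2 (f - fstar) (Y - fstar), evaluated at X; the cross term has mean zero because
   fstar(X) is the conditional expectation of Y given X. Off that event |Y| > sigma/2, and the Huber
   loss being 2 sigma-Lipschitz bounds the remainder by 16 M |Y| <= 16 M (2/sigma)^eps |Y|^(1+eps),
   whose mean is finite by the moment assumption. *)

lemma integrable_mult_bounded:
  fixes g h :: "'a \<Rightarrow> real"
  assumes g: "integrable M g" and h: "h \<in> borel_measurable M" and h_le: "AE x in M. \<bar>h x\<bar> \<le> B"
  shows "integrable M (\<lambda>x. h x * g x)"
proof (rule Bochner_Integration.integrable_bound)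
  show "integrable M (\<lambda>x. B * \<bar>g x\<bar>)" using g by simp
  show "AE x in M. norm (h x * g x) \<le> norm (B * \<bar>g x\<bar>)"
    using h_le by eventually_elim (auto simp: abs_mult intro: mult_right_mono)
qed (use g h in simp)

lemma integral_comp_mult_eq_of_cond_exp:
  fixes Y :: "'b \<Rightarrow> real" and g h :: "'a \<Rightarrow> real"
  assumes "finite_measure M"
    and X[measurable]: "X \<in> M \<rightarrow>\<^sub>M N"
    and [measurable]: "g \<in> borel_measurable N" "h \<in> borel_measurable N"
    and Y: "integrable M Y" and gX: "integrable M (\<lambda>z. g (X z))"
    and cond_exp: "\<And>A. A \<in> sets N \<Longrightarrow>
      (\<integral>z. indicator A (X z) * Y z \<partial>M) = (\<integral>z. indicator A (X z) * g (X z) \<partial>M)"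
    and hY: "integrable M (\<lambda>z. h (X z) * Y z)"
  shows "(\<integral>z. h (X z) * Y z \<partial>M) = (\<integral>z. h (X z) * g (X z) \<partial>M)"
proof -
  define F where "F = vimage_algebra (space M) X N"
  have sets_F: "sets F = {X -` A \<inter> space M | A. A \<in> sets N}"
    unfolding F_def using measurable_space[OF X] by (intro sets_vimage_algebra2) auto
  interpret finite_measure M by fact
  interpret finite_measure_subalgebra M F
  proof
    show "subalgebra M F"
      unfolding subalgebra_def using sets_F measurable_sets[OF X] by (auto simp: F_def)
  qed
  have XF: "X \<in> F \<rightarrow>\<^sub>M N"
    unfolding F_def by (rule measurable_vimage_algebra1) (use measurable_space[OF X] in auto)
  have comp_F: "(\<lambda>z. k (X z)) \<in> borel_measurable F" if "k \<in> borel_measurable N" for k :: "'a \<Rightarrow> real"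
    using measurable_compose[OF XF that] .
  have [measurable]: "Y \<in> borel_measurable M" using Y by simp
  have "AE z in M. real_cond_exp M F Y z = g (X z)"
  proof (rule real_cond_exp_charact)
    fix B assume "B \<in> sets F"
    then obtain A where A: "A \<in> sets N" "B = X -` A \<inter> space M" using sets_F by auto
    have "(\<integral>z \<in> B. f z \<partial>M) = (\<integral>z. indicator A (X z) * f z \<partial>M)" for f :: "'b \<Rightarrow> real"
      unfolding set_lebesgue_integral_def A(2)
      by (intro Bochner_Integration.integral_cong) (auto simp: indicator_def)
    then show "(\<integral>z \<in> B. Y z \<partial>M) = (\<integral>z \<in> B. g (X z) \<partial>M)" using cond_exp[OF A(1)] by simp
  qed (use Y gX comp_F in simp_all)
  then have "(\<integral>z. h (X z) * real_cond_exp M F Y z \<partial>M) = (\<integral>z. h (X z) * g (X z) \<partial>M)"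
    by (intro integral_cong_AE) auto
  moreover have "(\<integral>z. h (X z) * real_cond_exp M F Y z \<partial>M) = (\<integral>z. h (X z) * Y z \<partial>M)"
    by (rule real_cond_exp_intg(2)[OF hY]) (use comp_F in simp_all)
  ultimately show ?thesis by simp
qed

lemma
  fixes \<rho> :: "('a::topological_space \<times> 'b::topological_space) measure"
  assumes "sets \<rho> = sets borel"
  shows measurable_fst_borel: "fst \<in> \<rho> \<rightarrow>\<^sub>M borel"
    and measurable_snd_borel: "snd \<in> \<rho> \<rightarrow>\<^sub>M borel"
  unfolding measurable_cong_sets[OF assms refl]
  by (intro borel_measurable_continuous_onI continuous_intros)+

lemma L2_norm_rho_sq:
  assumes "sets \<rho> = sets borel" and "g \<in> borel_measurable borel"
  shows "(L2_norm_rho \<rho> g)\<^sup>2 = (\<integral>z. (g (fst z))\<^sup>2 \<partial>\<rho>)"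
  unfolding L2_norm_rho_def marginal_X_def
  using integral_distr[OF measurable_fst_borel[OF assms(1)], of "\<lambda>x. (g x)\<^sup>2"] assms(2)
  by simp

lemma abs_le_sup_norm_on:
  assumes "\<forall>x\<in>X. \<bar>f x\<bar> \<le> B" and "x \<in> X"
  shows "\<bar>f x\<bar> \<le> sup_norm_on X f"
  unfolding sup_norm_on_def using assms by (intro cSUP_upper) (auto intro: bdd_aboveI2)

lemma sup_norm_on_le:
  assumes "X \<noteq> {}" and "\<forall>x\<in>X. \<bar>f x\<bar> \<le> B"
  shows "sup_norm_on X f \<le> B"
  unfolding sup_norm_on_def using assms by (intro cSUP_least) auto

lemma abs_le_Sup_sup_norm_on:
  assumes "X \<noteq> {}" and f: "\<forall>x\<in>X. \<bar>f x\<bar> \<le> B" and H: "\<forall>h\<in>H. \<forall>x\<in>X. \<bar>h x\<bar> \<le> B'" and "x \<in> X"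
  shows "\<bar>f x\<bar> \<le> Sup ({sup_norm_on X f} \<union> sup_norm_on X ` H)"
proof -
  have "bdd_above ({sup_norm_on X f} \<union> sup_norm_on X ` H)"
    using sup_norm_on_le[OF assms(1)] H by (intro bdd_aboveI[of _ "max (sup_norm_on X f) B'"]) force
  then have "sup_norm_on X f \<le> Sup ({sup_norm_on X f} \<union> sup_norm_on X ` H)" by (intro cSup_upper) auto
  then show ?thesis using abs_le_sup_norm_on[OF f \<open>x \<in> X\<close>] by linarith
qed

lemma huber_abs [simp]: "huber s \<bar>t\<bar> = huber s t"
  by (simp add: huber_def)

lemma huber_abs_le:
  assumes "0 < s"
  shows "\<bar>huber s t\<bar> \<le> 2 * s * \<bar>t\<bar>"
proof (cases "\<bar>t\<bar> \<le> s")
  case True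
  then have "\<bar>t\<bar> * \<bar>t\<bar> \<le> s * \<bar>t\<bar>" by (intro mult_right_mono) auto
  then have "t\<^sup>2 \<le> s * \<bar>t\<bar>" by (simp add: power2_eq_square)
  moreover have "s * \<bar>t\<bar> \<le> 2 * s * \<bar>t\<bar>" using assms by simp
  ultimately have "t\<^sup>2 \<le> 2 * s * \<bar>t\<bar>" by linarith
  then show ?thesis using True by (simp add: huber_def)
next
  case False
  then have "s * s \<le> s * \<bar>t\<bar>" using assms by (intro mult_left_mono) auto
  then show ?thesis using False assms by (simp add: huber_def power2_eq_square)
qed

lemma huber_increment_bounds:
  assumes "0 < s" "0 \<le> b" "b \<le> a"
  shows "0 \<le> huber s a - huber s b \<and> huber s a - huber s b \<le> 2 * s * (a - b)"
proof -
  consider "a \<le> s" | "b \<le> s" "s < a" | "s < b" using assms by linarith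
  then show ?thesis
  proof cases
    case 1
    have "a\<^sup>2 - b\<^sup>2 = (a - b) * (a + b)" by (simp add: power2_eq_square algebra_simps)
    moreover have "(a - b) * (a + b) \<le> (a - b) * (2 * s)" using 1 assms by (intro mult_left_mono) auto
    ultimately show ?thesis using 1 assms by (simp add: huber_def ac_simps)
  next
    case 2
    have "b * b \<le> s * s" "s * s \<le> s * a" "0 \<le> (s - b) * (s - b)"
      using 2 assms by (auto intro: mult_mono)
    moreover have "huber s a - huber s b = 2 * (s * a) - s * s - b * b"
      using 2 assms by (simp add: huber_def power2_eq_square)
    ultimately show ?thesis by (simp add: algebra_simps)
  next
    case 3
    then show ?thesis using assms by (simp add: huber_def algebra_simps)
  qed
qed

lemma huber_lipschitz:
  assumes "0 < s"
  shows "\<bar>huber s u - huber s t\<bar> \<le> 2 * s * \<bar>u - t\<bar>"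
proof -
  have "\<bar>huber s u - huber s t\<bar> \<le> 2 * s * \<bar>\<bar>u\<bar> - \<bar>t\<bar>\<bar>"
    using huber_increment_bounds[OF assms, of "\<bar>t\<bar>" "\<bar>u\<bar>"] huber_increment_bounds[OF assms, of "\<bar>u\<bar>" "\<bar>t\<bar>"]
    by (cases "\<bar>t\<bar> \<le> \<bar>u\<bar>") auto
  also have "\<dots> \<le> 2 * s * \<bar>u - t\<bar>" using assms by (intro mult_left_mono) auto
  finally show ?thesis .
qed

lemma abs_le_one_plus_powr:
  fixes y e :: real
  assumes "0 \<le> e"
  shows "\<bar>y\<bar> \<le> 1 + \<bar>y\<bar> powr (1 + e)"
proof (cases "1 \<le> \<bar>y\<bar>")
  case True
  then have "\<bar>y\<bar> powr 1 \<le> \<bar>y\<bar> powr (1 + e)" using assms by (intro powr_mono) auto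
  then show ?thesis using True by simp
qed (auto intro: add_increasing2)

lemma abs_le_powr_div_powr:
  fixes y s e :: real
  assumes "0 < s" "s \<le> 2 * \<bar>y\<bar>" "0 \<le> e"
  shows "\<bar>y\<bar> \<le> 2 powr e / s powr e * \<bar>y\<bar> powr (1 + e)"
proof -
  have "1 \<le> (2 * \<bar>y\<bar> / s) powr e" using assms by (intro ge_one_powr_ge_zero) auto
  then have "\<bar>y\<bar> * 1 \<le> \<bar>y\<bar> * (2 * \<bar>y\<bar> / s) powr e" by (intro mult_left_mono) auto
  also have "\<dots> = 2 powr e / s powr e * \<bar>y\<bar> powr (1 + e)"
    using assms by (simp add: powr_mult powr_divide powr_add)
  finally show ?thesis by simp
qed

definition huber_quadratic_remainder :: "real \<Rightarrow> real \<Rightarrow> real \<Rightarrow> real \<Rightarrow> real" where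
  "huber_quadratic_remainder s a b y =
    huber s (y - b) - huber s (y - a) - ((b - a)\<^sup>2 - 2 * (b - a) * (y - a))"

lemma huber_quadratic_remainder_le:
  fixes s M e a b y :: real
  assumes s: "2 * M < s" and a: "\<bar>a\<bar> \<le> M" and b: "\<bar>b\<bar> \<le> M" and e: "0 \<le> e"
  shows "\<bar>huber_quadratic_remainder s a b y\<bar> \<le> 16 * M * 2 powr e / s powr e * \<bar>y\<bar> powr (1 + e)"
proof (cases "\<bar>y\<bar> \<le> s - M")
  case True
  then have "\<bar>y - b\<bar> \<le> s" "\<bar>y - a\<bar> \<le> s" using a b by auto
  then have "huber s (y - b) - huber s (y - a) = (b - a)\<^sup>2 - 2 * (b - a) * (y - a)"
    by (simp add: huber_def power2_eq_square algebra_simps)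
  moreover have "0 \<le> M" using a by simp
  ultimately show ?thesis by (simp add: huber_quadratic_remainder_def)
next
  case False
  have s0: "0 < s" and y: "s \<le> 2 * \<bar>y\<bar>" "M \<le> \<bar>y\<bar>" and M0: "0 \<le> M"
    using False s a by auto
  have "\<bar>huber s (y - b) - huber s (y - a)\<bar> \<le> 2 * s * \<bar>b - a\<bar>"
    using huber_lipschitz[OF s0, of "y - b" "y - a"] by (simp add: abs_minus_commute)
  also have "\<dots> \<le> 2 * s * (2 * M)" using a b s0 by (intro mult_left_mono) auto
  also have "\<dots> \<le> 8 * (M * \<bar>y\<bar>)" using mult_left_mono[OF y(1) M0] by (simp add: algebra_simps)
  finally have lin: "\<bar>huber s (y - b) - huber s (y - a)\<bar> \<le> 8 * (M * \<bar>y\<bar>)" .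
  have "\<bar>(b - a)\<^sup>2 - 2 * (b - a) * (y - a)\<bar> = \<bar>b - a\<bar> * \<bar>a + b - 2 * y\<bar>"
    by (simp add: power2_eq_square algebra_simps abs_mult[symmetric])
  also have "\<dots> \<le> (2 * M) * (4 * \<bar>y\<bar>)" using a b y by (intro mult_mono) auto
  finally have quad: "\<bar>(b - a)\<^sup>2 - 2 * (b - a) * (y - a)\<bar> \<le> 8 * (M * \<bar>y\<bar>)" by simp
  have "\<bar>huber s (y - b) - huber s (y - a) - ((b - a)\<^sup>2 - 2 * (b - a) * (y - a))\<bar> \<le> 16 * M * \<bar>y\<bar>"
    using lin quad by linarith
  also have "\<dots> \<le> 16 * M * (2 powr e / s powr e * \<bar>y\<bar> powr (1 + e))"
    using abs_le_powr_div_powr[OF s0 y(1) e] M0 by (intro mult_left_mono) auto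
  finally show ?thesis by (simp add: huber_quadratic_remainder_def)
qed

lemma borel_measurable_huber [measurable]: "huber s \<in> borel_measurable borel"
  unfolding huber_def by measurable

lemma integrable_huber_loss:
  fixes \<rho> :: "('a::topological_space \<times> real) measure"
  assumes "finite_measure \<rho>" and sets: "sets \<rho> = sets borel" and f: "f \<in> borel_measurable borel"
    and f_le: "AE z in \<rho>. \<bar>f (fst z)\<bar> \<le> M" and Y: "integrable \<rho> snd" and s: "0 < s"
  shows "integrable \<rho> (\<lambda>z. huber s (snd z - f (fst z)))"
proof (rule Bochner_Integration.integrable_bound)
  interpret finite_measure \<rho> by fact
  show "integrable \<rho> (\<lambda>z. 2 * s * (\<bar>snd z\<bar> + M))" using Y by simp
  show "(\<lambda>z. huber s (snd z - f (fst z))) \<in> borel_measurable \<rho>"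
    using measurable_fst_borel[OF sets] measurable_snd_borel[OF sets] f by measurable
  show "AE z in \<rho>. norm (huber s (snd z - f (fst z))) \<le> norm (2 * s * (\<bar>snd z\<bar> + M))"
    using f_le
  proof eventually_elim
    case (elim z)
    have "\<bar>huber s (snd z - f (fst z))\<bar> \<le> 2 * s * \<bar>snd z - f (fst z)\<bar>" by (rule huber_abs_le[OF s])
    also have "\<dots> \<le> 2 * s * (\<bar>snd z\<bar> + M)" using elim s by (intro mult_left_mono) auto
    finally show ?case by simp
  qed
qed

lemma huber_excess_risk_eq_integral:
  fixes \<rho> :: "('a::topological_space \<times> real) measure" and X :: "'a set"
  assumes "finite_measure \<rho>" and sets: "sets \<rho> = sets borel"
    and supp: "AE z in \<rho>. fst z \<in> X"
    and [measurable]: "fstar \<in> borel_measurable borel" "f \<in> borel_measurable borel"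
    and fstar_le: "\<forall>x\<in>X. \<bar>fstar x\<bar> \<le> M" and f_le: "\<forall>x\<in>X. \<bar>f x\<bar> \<le> M"
    and cond_exp: "\<forall>A\<in>sets borel.
      (\<integral>z. indicator A (fst z) * snd z \<partial>\<rho>) = (\<integral>z. indicator A (fst z) * fstar (fst z) \<partial>\<rho>)"
    and Y: "integrable \<rho> snd" and s: "0 < s"
  shows "(huber_risk s \<rho> f - huber_risk s \<rho> fstar) - (L2_norm_rho \<rho> (\<lambda>x. f x - fstar x))\<^sup>2
    = (\<integral>z. huber_quadratic_remainder s (fstar (fst z)) (f (fst z)) (snd z) \<partial>\<rho>)"
proof -
  interpret finite_measure \<rho> by fact
  note [measurable] = measurable_fst_borel[OF sets] measurable_snd_borel[OF sets]
  have fstar_ae: "AE z in \<rho>. \<bar>fstar (fst z)\<bar> \<le> M" and f_ae: "AE z in \<rho>. \<bar>f (fst z)\<bar> \<le> M"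
    using supp fstar_le f_le by auto
  define d where "d = (\<lambda>x. f x - fstar x)"
  have d_ae: "AE z in \<rho>. \<bar>d (fst z)\<bar> \<le> 2 * M"
    using f_ae fstar_ae by eventually_elim (simp add: d_def)
  have [measurable]: "d \<in> borel_measurable borel" by (simp add: d_def)
  have fstar_int: "integrable \<rho> (\<lambda>z. fstar (fst z))"
    by (rule integrable_const_bound[where B = M]) (use fstar_ae in simp_all)
  have d_int: "integrable \<rho> (\<lambda>z. d (fst z))"
    by (rule integrable_const_bound[where B = "2 * M"]) (use d_ae in simp_all)
  have d_sq: "integrable \<rho> (\<lambda>z. (d (fst z))\<^sup>2)"
    using integrable_mult_bounded[OF d_int _ d_ae] by (simp add: power2_eq_square)
  have d_Y: "integrable \<rho> (\<lambda>z. d (fst z) * snd z)"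
    using integrable_mult_bounded[OF Y _ d_ae] by simp
  have d_fstar: "integrable \<rho> (\<lambda>z. d (fst z) * fstar (fst z))"
    using integrable_mult_bounded[OF fstar_int _ d_ae] by simp
  have H: "integrable \<rho> (\<lambda>z. huber s (snd z - g (fst z)))"
    if "g \<in> borel_measurable borel" "AE z in \<rho>. \<bar>g (fst z)\<bar> \<le> M" for g
    by (rule integrable_huber_loss[OF assms(1) sets that Y s])
  have orth: "(\<integral>z. d (fst z) * snd z \<partial>\<rho>) = (\<integral>z. d (fst z) * fstar (fst z) \<partial>\<rho>)"
    by (rule integral_comp_mult_eq_of_cond_exp[OF assms(1) measurable_fst_borel[OF sets] _ _ Y fstar_int _ d_Y])
      (use cond_exp in auto)
  have "(\<integral>z. huber s (snd z - f (fst z)) - huber s (snd z - fstar (fst z))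
        - ((d (fst z))\<^sup>2 - 2 * (d (fst z) * snd z - d (fst z) * fstar (fst z))) \<partial>\<rho>)
    = huber_risk s \<rho> f - huber_risk s \<rho> fstar
        - ((\<integral>z. (d (fst z))\<^sup>2 \<partial>\<rho>) - 2 * ((\<integral>z. d (fst z) * snd z \<partial>\<rho>) - (\<integral>z. d (fst z) * fstar (fst z) \<partial>\<rho>)))"
    unfolding huber_risk_def using H[OF _ f_ae] H[OF _ fstar_ae] d_sq d_Y d_fstar by simp
  also have "\<dots> = (huber_risk s \<rho> f - huber_risk s \<rho> fstar) - (L2_norm_rho \<rho> (\<lambda>x. f x - fstar x))\<^sup>2"
    using orth L2_norm_rho_sq[OF sets, of d] by (simp add: d_def)
  finally show ?thesis by (simp add: huber_quadratic_remainder_def d_def algebra_simps)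
qed

lemma huber_excess_risk_deviation_le:
  fixes \<rho> :: "('a::topological_space \<times> real) measure" and X :: "'a set"
  assumes "finite_measure \<rho>" and sets: "sets \<rho> = sets borel"
    and supp: "AE z in \<rho>. fst z \<in> X" and M0: "0 \<le> M"
    and fstar_meas: "fstar \<in> borel_measurable borel" and f_meas: "f \<in> borel_measurable borel"
    and fstar_le: "\<forall>x\<in>X. \<bar>fstar x\<bar> \<le> M" and f_le: "\<forall>x\<in>X. \<bar>f x\<bar> \<le> M"
    and cond_exp: "\<forall>A\<in>sets borel.
      (\<integral>z. indicator A (fst z) * snd z \<partial>\<rho>) = (\<integral>z. indicator A (fst z) * fstar (fst z) \<partial>\<rho>)"
    and moment: "integrable \<rho> (\<lambda>z. \<bar>snd z\<bar> powr (1 + e))"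
    and e: "0 \<le> e" and s: "2 * M < s"
  shows "\<bar>(huber_risk s \<rho> f - huber_risk s \<rho> fstar) - (L2_norm_rho \<rho> (\<lambda>x. f x - fstar x))\<^sup>2\<bar>
    \<le> 16 * M * 2 powr e / s powr e * (\<integral>z. \<bar>snd z\<bar> powr (1 + e) \<partial>\<rho>)"
proof -
  interpret finite_measure \<rho> by fact
  note [measurable] = measurable_snd_borel[OF sets]
  have Y: "integrable \<rho> snd"
  proof (rule Bochner_Integration.integrable_bound)
    show "integrable \<rho> (\<lambda>z. 1 + \<bar>snd z\<bar> powr (1 + e))" using moment by simp
    show "AE z in \<rho>. norm (snd z) \<le> norm (1 + \<bar>snd z\<bar> powr (1 + e))"
      using abs_le_one_plus_powr[OF e] by (intro AE_I2) (simp add: add_nonneg_nonneg)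
  qed simp
  define C where "C = 16 * M * 2 powr e / s powr e"
  have "\<bar>(huber_risk s \<rho> f - huber_risk s \<rho> fstar) - (L2_norm_rho \<rho> (\<lambda>x. f x - fstar x))\<^sup>2\<bar>
    = \<bar>\<integral>z. huber_quadratic_remainder s (fstar (fst z)) (f (fst z)) (snd z) \<partial>\<rho>\<bar>"
    using huber_excess_risk_eq_integral[OF assms(1) sets supp fstar_meas f_meas fstar_le f_le cond_exp Y] M0 s
    by simp
  also have "\<dots> \<le> (\<integral>z. \<bar>huber_quadratic_remainder s (fstar (fst z)) (f (fst z)) (snd z)\<bar> \<partial>\<rho>)"
    by (rule integral_abs_bound)
  also have "\<dots> \<le> (\<integral>z. C * \<bar>snd z\<bar> powr (1 + e) \<partial>\<rho>)"
  proof (rule integral_mono_AE')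
    show "AE z in \<rho>. \<bar>huber_quadratic_remainder s (fstar (fst z)) (f (fst z)) (snd z)\<bar>
      \<le> C * \<bar>snd z\<bar> powr (1 + e)"
      using supp
      by eventually_elim (use fstar_le f_le huber_quadratic_remainder_le[OF s _ _ e] in \<open>simp add: C_def\<close>)
    show "AE z in \<rho>. 0 \<le> C * \<bar>snd z\<bar> powr (1 + e)" using M0 by (simp add: C_def)
  qed (use moment in simp)
  finally show ?thesis by (simp add: C_def)
qed

theorem theorem1:
  fixes \<X> :: "'a::euclidean_space set" and \<Y> :: "real set"
    and \<rho> :: "('a \<times> real) measure"
    and fstar :: "'a \<Rightarrow> real" and \<H> :: "('a \<Rightarrow> real) set"
    and \<epsilon> :: real and M :: real
  assumes X_compact: "compact \<X>"
    and rho_prob: "prob_space \<rho>"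
    and rho_sets: "sets \<rho> = sets borel"
    and rho_supp: "AE z in \<rho>. fst z \<in> \<X> \<and> snd z \<in> \<Y>"
    and fstar_meas: "fstar \<in> borel_measurable borel"
    and fstar_bdd: "\<exists>B. \<forall>x\<in>\<X>. \<bar>fstar x\<bar> \<le> B"
    and fstar_condexp: "\<forall>A\<in>sets borel.
          (\<integral>z. indicator A (fst z) * snd z \<partial>\<rho>) = (\<integral>z. indicator A (fst z) * fstar (fst z) \<partial>\<rho>)"
    and H_cont: "\<forall>h\<in>\<H>. continuous_on \<X> h"
    and H_unif_bdd: "\<exists>B. \<forall>h\<in>\<H>. \<forall>x\<in>\<X>. \<bar>h x\<bar> \<le> B"
    and M_def: "M = Sup ({sup_norm_on \<X> fstar} \<union> (sup_norm_on \<X>) ` \<H>)"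
    and eps_pos: "\<epsilon> > 0"
    and moment: "integrable \<rho> (\<lambda>z. \<bar>snd z\<bar> powr (1 + \<epsilon>))"
  shows "\<exists>c>0. \<forall>\<sigma>::real. \<sigma> > max (2 * M) 1 \<longrightarrow>
           (\<forall>f::'a \<Rightarrow> real. f \<in> borel_measurable borel \<longrightarrow> (\<forall>x\<in>\<X>. \<bar>f x\<bar> \<le> M) \<longrightarrow>
              \<bar>(huber_risk \<sigma> \<rho> f - huber_risk \<sigma> \<rho> fstar)
                 - (L2_norm_rho \<rho> (\<lambda>x. f x - fstar x))\<^sup>2\<bar> \<le> c / \<sigma> powr \<epsilon>)"
proof -
  interpret prob_space \<rho> by (rule rho_prob)
  have X_ne: "\<X> \<noteq> {}" using rho_supp AE_False by fastforce
  have fstar_le: "\<forall>x\<in>\<X>. \<bar>fstar x\<bar> \<le> M"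
    using fstar_bdd H_unif_bdd abs_le_Sup_sup_norm_on[OF X_ne] unfolding M_def by blast
  then have M0: "0 \<le> M" using X_ne by force
  define m where "m = (\<integral>z. \<bar>snd z\<bar> powr (1 + \<epsilon>) \<partial>\<rho>)"
  have "0 \<le> m" unfolding m_def by simp
  show ?thesis
  proof (intro exI[of _ "16 * M * 2 powr \<epsilon> * m + 1"] conjI allI impI)
    show "0 < 16 * M * 2 powr \<epsilon> * m + 1" using M0 \<open>0 \<le> m\<close> by (intro add_nonneg_pos mult_nonneg_nonneg) auto
    fix \<sigma> :: real and f :: "'a \<Rightarrow> real"
    assume "\<sigma> > max (2 * M) 1" "f \<in> borel_measurable borel" "\<forall>x\<in>\<X>. \<bar>f x\<bar> \<le> M"
    then have "\<bar>(huber_risk \<sigma> \<rho> f - huber_risk \<sigma> \<rho> fstar) - (L2_norm_rho \<rho> (\<lambda>x. f x - fstar x))\<^sup>2\<bar>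
        \<le> 16 * M * 2 powr \<epsilon> / \<sigma> powr \<epsilon> * m"
      unfolding m_def using rho_supp eps_pos
      by (intro huber_excess_risk_deviation_le[OF finite_measure rho_sets _ M0 fstar_meas _ fstar_le _
            fstar_condexp moment]) auto
    also have "\<dots> \<le> (16 * M * 2 powr \<epsilon> * m + 1) / \<sigma> powr \<epsilon>"
      by (simp add: divide_right_mono)
    finally show "\<bar>(huber_risk \<sigma> \<rho> f - huber_risk \<sigma> \<rho> fstar) - (L2_norm_rho \<rho> (\<lambda>x. f x - fstar x))\<^sup>2\<bar>
        \<le> (16 * M * 2 powr \<epsilon> * m + 1) / \<sigma> powr \<epsilon>" .
  qed
qed

end
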